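(* Let $X$ and $Y$ be Dedekind complete Riesz spaces and $f:X\to Y$ an order continuous increasing map. Then: (i) $f$ extends to a unique left order continuous increasing map $f^{s}:X^{s}\to Y^{s}$; if $f$ is additive (resp. positively homogeneous), so is $f^{s}$. (ii) If $f$ is only defined from $X_{+}$ to $Y_{+}$ (and is order continuous and increasing there), then $f$ has a unique left order continuous increasing extension $f^{s}:X^{s}_{+}\to Y^{s}_{+}$; if $f$ is additive (resp. positively homogeneous), so is $f^{s}$. (iii) If moreover $Y=X$, $f$ is a linear projection and $f(X)$ is a Riesz subspace of $X$, then $f(X)$ is a regular Riesz subspace of $X$ and $f^{s}(X^{s})=f(X)^{s}$. (iv) If moreover $Y=X$, $f$ is linear, and $Z$ is a regular Riesz subspace of $X$ invariant under $f$, then $Z^{s}$ is invariant under $f^{s}$.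
   Context: For a Dedekind complete Riesz space $X$, its sup-completion $X^{s}$ is the set of classes of nonempty upward directed subsets of $X$ under $A\sim B$ iff $\sup_{a\in A}(x\wedge a)=\sup_{b\in B}(x\wedge b)$ for all $x\in X$, with the induced addition, nonnegative scalar multiplication and order; $X\subseteq X^s$ via $x\mapsto[\{x\}]$; every nonempty subset of $X^{s}$ has a supremum and every element is the supremum of the elements of $X$ below it. A map $g$ is left order continuous if $x_\alpha\uparrow x$ implies $g(x_\alpha)\uparrow g(x)$. A Riesz subspace $Z$ of $X$ is regular if suprema of subsets of $Z$ computed in $Z$ agree with those computed in $X$; for such $Z$, $Z^{s}$ is identified with $\{\sup A:\emptyset\ne A\subseteq Z\}\subseteq X^{s}$. *)

theory Defs
  imports Complex_Main
begin

class dc_riesz_space = ordered_real_vector + conditionally_complete_lattice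

definition updir :: "'a::order set \<Rightarrow> bool" where
  "updir A \<longleftrightarrow> (\<forall>a\<in>A. \<forall>b\<in>A. \<exists>c\<in>A. a \<le> c \<and> b \<le> c)"

definition downdir :: "'a::order set \<Rightarrow> bool" where
  "downdir A \<longleftrightarrow> (\<forall>a\<in>A. \<forall>b\<in>A. \<exists>c\<in>A. c \<le> a \<and> c \<le> b)"

definition is_lub_on :: "'a::order set \<Rightarrow> 'a set \<Rightarrow> 'a \<Rightarrow> bool" where
  "is_lub_on S A z \<longleftrightarrow> z \<in> S \<and> (\<forall>a\<in>A. a \<le> z) \<and> (\<forall>w\<in>S. (\<forall>a\<in>A. a \<le> w) \<longrightarrow> z \<le> w)"

definition is_glb :: "'a::order set \<Rightarrow> 'a \<Rightarrow> bool" where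
  "is_glb D z \<longleftrightarrow> (\<forall>d\<in>D. z \<le> d) \<and> (\<forall>l. (\<forall>d\<in>D. l \<le> d) \<longrightarrow> l \<le> z)"

text \<open>Order convergence of a net, expressed through its image filter F (F = bot excluded):
  there is a set D downward directed to 0 with |y - x| \<le> d eventually, for every d in D.\<close>
definition ord_conv :: "'a::dc_riesz_space filter \<Rightarrow> 'a \<Rightarrow> bool" where
  "ord_conv F x \<longleftrightarrow> (\<exists>D. D \<noteq> {} \<and> downdir D \<and> is_glb D 0 \<and>
      (\<forall>d\<in>D. eventually (\<lambda>y. sup (y - x) (x - y) \<le> d) F))"

definition order_continuous :: "('a::dc_riesz_space \<Rightarrow> 'b::dc_riesz_space) \<Rightarrow> bool" where
  "order_continuous f \<longleftrightarrow>
     (\<forall>F x. F \<noteq> bot \<longrightarrow> ord_conv F x \<longrightarrow> ord_conv (filtermap f F) (f x))"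

definition order_continuous_pos :: "('a::dc_riesz_space \<Rightarrow> 'b::dc_riesz_space) \<Rightarrow> bool" where
  "order_continuous_pos f \<longleftrightarrow>
     (\<forall>F x. F \<noteq> bot \<longrightarrow> eventually (\<lambda>y. 0 \<le> y) F \<longrightarrow> 0 \<le> x \<longrightarrow>
        ord_conv F x \<longrightarrow> ord_conv (filtermap f F) (f x))"

definition riesz_subspace :: "'a::dc_riesz_space set \<Rightarrow> bool" where
  "riesz_subspace Z \<longleftrightarrow> subspace Z \<and> (\<forall>x\<in>Z. \<forall>y\<in>Z. sup x y \<in> Z \<and> inf x y \<in> Z)"

definition regular_subspace :: "'a::dc_riesz_space set \<Rightarrow> bool" where
  "regular_subspace Z \<longleftrightarrow> riesz_subspace Z \<and>
     (\<forall>A z. A \<noteq> {} \<longrightarrow> A \<subseteq> Z \<longrightarrow> is_lub_on Z A z \<longrightarrow> is_lub_on UNIV A z)"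

definition Dirs :: "'a::dc_riesz_space set set" where
  "Dirs = {A. A \<noteq> {} \<and> updir A}"

definition scut :: "'a::dc_riesz_space set \<Rightarrow> 'a \<Rightarrow> 'a" where
  "scut A x = Sup ((\<lambda>a. inf x a) ` A)"

definition srel :: "('a::dc_riesz_space set \<times> 'a set) set" where
  "srel = {(A, B). A \<in> Dirs \<and> B \<in> Dirs \<and> (\<forall>x. scut A x = scut B x)}"

text \<open>The sup-completion X^s as the set of equivalence classes.\<close>
definition SC :: "'a::dc_riesz_space set set set" where
  "SC = Dirs // srel"

definition semb :: "'a::dc_riesz_space \<Rightarrow> 'a set set" where
  "semb x = srel `` {{x}}"

definition srep :: "'a::dc_riesz_space set set \<Rightarrow> 'a set" where
  "srep u = (SOME A. A \<in> u)"

definition sle :: "'a::dc_riesz_space set set \<Rightarrow> 'a set set \<Rightarrow> bool" where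
  "sle u v \<longleftrightarrow> (\<forall>x. scut (srep u) x \<le> scut (srep v) x)"

definition sadd :: "'a::dc_riesz_space set set \<Rightarrow> 'a set set \<Rightarrow> 'a set set" where
  "sadd u v = srel `` {{a + b | a b. a \<in> srep u \<and> b \<in> srep v}}"

definition ssmul :: "real \<Rightarrow> 'a::dc_riesz_space set set \<Rightarrow> 'a set set" where
  "ssmul t u = srel `` {(\<lambda>a. t *\<^sub>R a) ` srep u}"

definition SCpos :: "'a::dc_riesz_space set set set" where
  "SCpos = {u \<in> SC. sle (semb 0) u}"

definition is_slub :: "'a::dc_riesz_space set set set \<Rightarrow> 'a set set \<Rightarrow> bool" where
  "is_slub S u \<longleftrightarrow> u \<in> SC \<and> (\<forall>v\<in>S. sle v u) \<and> (\<forall>w\<in>SC. (\<forall>v\<in>S. sle v w) \<longrightarrow> sle u w)"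

definition sdir :: "'a::dc_riesz_space set set set \<Rightarrow> bool" where
  "sdir D \<longleftrightarrow> (\<forall>u\<in>D. \<forall>v\<in>D. \<exists>w\<in>D. sle u w \<and> sle v w)"

definition sincr :: "'a::dc_riesz_space set set set \<Rightarrow> ('a set set \<Rightarrow> 'b::dc_riesz_space set set) \<Rightarrow> bool" where
  "sincr S g \<longleftrightarrow> (\<forall>u\<in>S. \<forall>v\<in>S. sle u v \<longrightarrow> sle (g u) (g v))"

text \<open>Left order continuity on S: x_alpha increasing to x implies g(x_alpha) increasing to g(x);
  increasing nets are represented by their (upward directed) ranges.\<close>
definition left_oc :: "'a::dc_riesz_space set set set \<Rightarrow> ('a set set \<Rightarrow> 'b::dc_riesz_space set set) \<Rightarrow> bool" where
  "left_oc S g \<longleftrightarrow> (\<forall>D u. D \<subseteq> S \<longrightarrow> D \<noteq> {} \<longrightarrow> sdir D \<longrightarrow> u \<in> S \<longrightarrow> is_slub D u \<longrightarrow>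
      is_slub (g ` D) (g u))"

definition sadditive :: "'a::dc_riesz_space set set set \<Rightarrow> ('a set set \<Rightarrow> 'b::dc_riesz_space set set) \<Rightarrow> bool" where
  "sadditive S g \<longleftrightarrow> (\<forall>u\<in>S. \<forall>v\<in>S. g (sadd u v) = sadd (g u) (g v))"

definition sposhom :: "'a::dc_riesz_space set set set \<Rightarrow> ('a set set \<Rightarrow> 'b::dc_riesz_space set set) \<Rightarrow> bool" where
  "sposhom S g \<longleftrightarrow> (\<forall>t::real. \<forall>u\<in>S. 0 \<le> t \<longrightarrow> g (ssmul t u) = ssmul t (g u))"

definition is_sup_ext :: "('a::dc_riesz_space \<Rightarrow> 'b::dc_riesz_space) \<Rightarrow> ('a set set \<Rightarrow> 'b set set) \<Rightarrow> bool" where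
  "is_sup_ext f g \<longleftrightarrow> (\<forall>u\<in>SC. g u \<in> SC) \<and> (\<forall>x. g (semb x) = semb (f x)) \<and>
     sincr SC g \<and> left_oc SC g"

definition is_sup_ext_pos :: "('a::dc_riesz_space \<Rightarrow> 'b::dc_riesz_space) \<Rightarrow> ('a set set \<Rightarrow> 'b set set) \<Rightarrow> bool" where
  "is_sup_ext_pos f g \<longleftrightarrow> (\<forall>u\<in>SCpos. g u \<in> SCpos) \<and> (\<forall>x. 0 \<le> x \<longrightarrow> g (semb x) = semb (f x)) \<and>
     sincr SCpos g \<and> left_oc SCpos g"

text \<open>Z^s for a regular Riesz subspace Z, as a subset of X^s.\<close>
definition sub_SC :: "'a::dc_riesz_space set \<Rightarrow> 'a set set set" where
  "sub_SC Z = {u. \<exists>A. A \<noteq> {} \<and> A \<subseteq> Z \<and> is_slub (semb ` A) u}"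

definition additive_map :: "('a::dc_riesz_space \<Rightarrow> 'b::dc_riesz_space) \<Rightarrow> bool" where
  "additive_map f \<longleftrightarrow> (\<forall>x y. f (x + y) = f x + f y)"

definition additive_pos :: "('a::dc_riesz_space \<Rightarrow> 'b::dc_riesz_space) \<Rightarrow> bool" where
  "additive_pos f \<longleftrightarrow> (\<forall>x y. 0 \<le> x \<longrightarrow> 0 \<le> y \<longrightarrow> f (x + y) = f x + f y)"

definition poshom_map :: "('a::dc_riesz_space \<Rightarrow> 'b::dc_riesz_space) \<Rightarrow> bool" where
  "poshom_map f \<longleftrightarrow> (\<forall>t::real. \<forall>x. 0 \<le> t \<longrightarrow> f (t *\<^sub>R x) = t *\<^sub>R f x)"

definition poshom_pos :: "('a::dc_riesz_space \<Rightarrow> 'b::dc_riesz_space) \<Rightarrow> bool" where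
  "poshom_pos f \<longleftrightarrow> (\<forall>t::real. \<forall>x. 0 \<le> t \<longrightarrow> 0 \<le> x \<longrightarrow> f (t *\<^sub>R x) = t *\<^sub>R f x)"

end

theory Submission
  imports Defs "HOL-Library.Lattice_Algebras" "HOL-Library.Set_Algebras"
begin

text \<open>
  An element u of X^s is determined by the elements of X below it; for u = [A] these are the x with
  sup_{a \<in> A} (x \<sqinter> a) = x. Put f^s [A] = [f(A)], after replacing A by the elements of the domain
  (X or X_+) below [A]. This is well defined because, for x below [B], order continuity gives
  f x = sup_{b \<in> B} f (x \<sqinter> b), which lies below [f(B)]. The supremum of a directed family of
  classes is the class of the union of such representatives, so f^s is left order continuous;
  since every class is the directed supremum of the embedded elements of a representative, left
  order continuity also forces uniqueness. Sums and positive multiples in X^s are computed on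
  representatives, so additivity and homogeneity pass from f to f^s. Finally, for a sup-closed Z
  the set Z^s consists of the classes of directed subsets of Z, which f^s [A] = [f(A)] maps to
  classes of directed subsets of f(Z).
\<close>

section \<open>Infinite distributivity\<close>

subclass (in dc_riesz_space) lattice_ab_group_add ..

lemma inf_cSup_distrib:
  fixes C :: "'a::dc_riesz_space set"
  assumes "C \<noteq> {}" "bdd_above C"
  shows "inf y (Sup C) = (SUP c\<in>C. inf y c)"
proof (rule order.antisym)
  let ?t = "SUP c\<in>C. inf y c"
  have bdd: "bdd_above ((\<lambda>c. inf y c) ` C)" by (rule bdd_aboveI[of _ y]) auto
  show "?t \<le> inf y (Sup C)"
    using assms by (intro cSUP_least) (auto intro: le_infI2 cSup_upper)
  have "c \<le> sup y (Sup C) + ?t - y" if "c \<in> C" for c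
  proof -
    have "y + c = sup y c + inf y c" by (rule add_eq_inf_sup)
    also have "\<dots> \<le> sup y (Sup C) + ?t"
      using that assms bdd by (intro add_mono sup_mono cSup_upper cSUP_upper) auto
    finally show ?thesis by (simp add: le_diff_eq add.commute)
  qed
  then have "Sup C \<le> sup y (Sup C) + ?t - y"
    using assms by (intro cSup_least) auto
  then have "y + Sup C \<le> sup y (Sup C) + ?t"
    by (simp add: le_diff_eq add.commute)
  then show "inf y (Sup C) \<le> ?t"
    using add_eq_inf_sup[of y "Sup C"] by simp
qed

lemma DirsI:
  "A \<noteq> {} \<Longrightarrow> (\<And>a b. a \<in> A \<Longrightarrow> b \<in> A \<Longrightarrow> \<exists>c\<in>A. a \<le> c \<and> b \<le> c) \<Longrightarrow> A \<in> Dirs"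
  unfolding Dirs_def updir_def by blast

lemma DirsD:
  assumes "A \<in> Dirs"
  shows "A \<noteq> {}" and "a \<in> A \<Longrightarrow> b \<in> A \<Longrightarrow> \<exists>c\<in>A. a \<le> c \<and> b \<le> c"
  using assms unfolding Dirs_def updir_def by auto

lemma singleton_Dirs: "{x} \<in> Dirs"
  by (rule DirsI) auto

lemma Dirs_image:
  assumes "A \<in> Dirs" "mono_on A g"
  shows "g ` A \<in> Dirs"
proof (rule DirsI)
  show "g ` A \<noteq> {}" using DirsD(1)[OF assms(1)] by simp
  fix x y assume "x \<in> g ` A" "y \<in> g ` A"
  then obtain a b where ab: "a \<in> A" "b \<in> A" "x = g a" "y = g b" by auto
  then obtain c where "c \<in> A" "a \<le> c" "b \<le> c" using DirsD(2)[OF assms(1)] by blast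
  then have "x \<le> g c" "y \<le> g c" using ab assms(2) by (auto dest: mono_onD)
  then show "\<exists>z\<in>g ` A. x \<le> z \<and> y \<le> z" using \<open>c \<in> A\<close> by blast
qed

lemma Dirs_set_plus:
  assumes "A \<in> Dirs" "B \<in> Dirs"
  shows "A + B \<in> Dirs"
proof (rule DirsI)
  show "A + B \<noteq> {}" using DirsD(1)[OF assms(1)] DirsD(1)[OF assms(2)] by (auto simp: set_plus_def)
  fix x y assume "x \<in> A + B" "y \<in> A + B"
  then obtain a b a' b' where h: "a \<in> A" "b \<in> B" "a' \<in> A" "b' \<in> B" "x = a + b" "y = a' + b'"
    by (auto elim!: set_plus_elim)
  obtain c where "c \<in> A" "a \<le> c" "a' \<le> c" using DirsD(2)[OF assms(1) h(1,3)] by blast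
  moreover obtain d where "d \<in> B" "b \<le> d" "b' \<le> d" using DirsD(2)[OF assms(2) h(2,4)] by blast
  ultimately show "\<exists>z\<in>A + B. x \<le> z \<and> y \<le> z"
    using h by (intro bexI[of _ "c + d"]) (auto intro: add_mono set_plus_intro)
qed

section \<open>Cuts of directed sets\<close>

definition dir_le :: "'a::dc_riesz_space set \<Rightarrow> 'a set \<Rightarrow> bool" where
  "dir_le A B \<longleftrightarrow> (\<forall>x. scut A x \<le> scut B x)"

text \<open>The elements x of X with x \<le> [A] in X^s.\<close>
definition below :: "'a::dc_riesz_space set \<Rightarrow> 'a set" where
  "below A = {x. scut A x = x}"

lemma bdd_above_inf_image: "bdd_above ((\<lambda>a. inf x a) ` (A::'a::dc_riesz_space set))"
  by (rule bdd_aboveI[of _ x]) auto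

lemma scut_le: "A \<noteq> {} \<Longrightarrow> scut A x \<le> x"
  unfolding scut_def by (rule cSUP_least) (simp_all add: inf.cobounded1)

lemma inf_le_scut: "a \<in> A \<Longrightarrow> inf x a \<le> scut A x"
  unfolding scut_def by (rule cSUP_upper[OF _ bdd_above_inf_image])

lemma scut_mono: "A \<noteq> {} \<Longrightarrow> x \<le> y \<Longrightarrow> scut A x \<le> scut A y"
  unfolding scut_def
proof (rule cSUP_least)
  fix a assume "A \<noteq> {}" "x \<le> y" "a \<in> A"
  then show "inf x a \<le> Sup ((\<lambda>a. inf y a) ` A)"
    by (intro cSUP_upper2[OF bdd_above_inf_image, of a]) (simp_all add: le_infI1)
qed

lemma belowI: "A \<noteq> {} \<Longrightarrow> x \<le> scut A x \<Longrightarrow> x \<in> below A"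
  unfolding below_def using scut_le by (auto intro: order.antisym)

lemma subset_below: "A \<subseteq> below A"
proof
  fix a assume "a \<in> A"
  then show "a \<in> below A" using belowI inf_le_scut[of a A a] by auto
qed

lemma below_down_closed:
  assumes "A \<noteq> {}" "x \<in> below A" "y \<le> x"
  shows "y \<in> below A"
proof -
  have "scut A y = (SUP a\<in>A. inf y (inf x a))"
    unfolding scut_def using assms(3) by (simp add: inf.assoc[symmetric] inf.absorb1)
  also have "\<dots> = inf y (scut A x)"
    unfolding scut_def using assms(1)
    by (subst inf_cSup_distrib) (auto simp: bdd_above_inf_image image_image)
  also have "\<dots> = y" using assms(2,3) unfolding below_def by (simp add: inf.absorb1)
  finally show ?thesis unfolding below_def by simp
qed

lemma below_cSup_closed:
  assumes "A \<noteq> {}" "C \<noteq> {}" "bdd_above C" "C \<subseteq> below A"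
  shows "Sup C \<in> below A"
proof (rule belowI[OF assms(1)])
  show "Sup C \<le> scut A (Sup C)"
  proof (rule cSup_least[OF assms(2)])
    fix c assume c: "c \<in> C"
    then have "c = scut A c" using assms(4) unfolding below_def by auto
    also have "\<dots> \<le> scut A (Sup C)" using c assms by (intro scut_mono cSup_upper) auto
    finally show "c \<le> scut A (Sup C)" .
  qed
qed

lemma below_sup_closed:
  assumes "A \<noteq> {}" "x \<in> below A" "y \<in> below A"
  shows "sup x y \<in> below A"
proof (rule belowI[OF assms(1)])
  have "x \<le> scut A (sup x y)" "y \<le> scut A (sup x y)"
    using assms scut_mono[of A x "sup x y"] scut_mono[of A y "sup x y"] unfolding below_def by auto
  then show "sup x y \<le> scut A (sup x y)" by simp
qed

lemma below_singleton: "below {y} = {x. x \<le> y}"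
proof -
  have "scut {y} x = inf x y" for x unfolding scut_def by simp
  then show ?thesis unfolding below_def by (metis inf.absorb_iff1)
qed

lemma dir_le_iff_subset_below:
  assumes "A \<noteq> {}" "B \<noteq> {}"
  shows "dir_le B A \<longleftrightarrow> B \<subseteq> below A"
proof
  assume le: "dir_le B A"
  show "B \<subseteq> below A"
  proof
    fix b assume "b \<in> B"
    then have "b \<in> below B" using subset_below by blast
    then have "b = scut B b" unfolding below_def by simp
    also have "\<dots> \<le> scut A b" using le unfolding dir_le_def by simp
    finally show "b \<in> below A" by (rule belowI[OF assms(1)])
  qed
next
  assume sub: "B \<subseteq> below A"
  have "inf y b \<le> scut A y" if "b \<in> B" for y b
  proof -
    have "inf y b \<in> below A"
      using below_down_closed[OF assms(1) subsetD[OF sub that] inf.cobounded2] .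
    then have "inf y b = scut A (inf y b)" unfolding below_def by simp
    also have "\<dots> \<le> scut A y" by (rule scut_mono[OF assms(1)]) simp
    finally show ?thesis .
  qed
  then show "dir_le B A"
    unfolding dir_le_def scut_def[of B] using assms(2) by (intro allI cSUP_least)
qed

lemma below_mono:
  assumes "dir_le A B" "B \<noteq> {}"
  shows "below A \<subseteq> below B"
proof
  fix x assume "x \<in> below A"
  then have "x = scut A x" unfolding below_def by simp
  also have "\<dots> \<le> scut B x" using assms(1) unfolding dir_le_def by simp
  finally show "x \<in> below B" by (rule belowI[OF assms(2)])
qed

lemma scut_eq_iff: "scut A = scut B \<longleftrightarrow> dir_le A B \<and> dir_le B A"
proof
  assume "scut A = scut B"
  then show "dir_le A B \<and> dir_le B A" unfolding dir_le_def by simp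
next
  assume "dir_le A B \<and> dir_le B A"
  then show "scut A = scut B" unfolding dir_le_def by (intro ext order.antisym) auto
qed

definition sclass :: "'a::dc_riesz_space set \<Rightarrow> 'a set set" where
  "sclass A = srel `` {A}"

lemma mem_sclass_iff: "B \<in> sclass A \<longleftrightarrow> A \<in> Dirs \<and> B \<in> Dirs \<and> scut A = scut B"
  unfolding sclass_def srel_def by (simp add: fun_eq_iff)

lemma sclass_in_SC: "A \<in> Dirs \<Longrightarrow> sclass A \<in> SC"
  unfolding SC_def sclass_def by (rule quotientI)

lemma semb_eq_sclass: "semb x = sclass {x}"
  unfolding semb_def sclass_def ..

lemma semb_in_SC: "semb x \<in> SC"
  unfolding semb_eq_sclass by (rule sclass_in_SC[OF singleton_Dirs])

lemma sclass_eq_iff: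
  assumes "A \<in> Dirs" "B \<in> Dirs"
  shows "sclass A = sclass B \<longleftrightarrow> scut A = scut B"
proof
  assume "sclass A = sclass B"
  moreover have "B \<in> sclass B" using assms(2) by (simp add: mem_sclass_iff)
  ultimately have "B \<in> sclass A" by simp
  then show "scut A = scut B" by (simp add: mem_sclass_iff)
next
  assume "scut A = scut B"
  then show "sclass A = sclass B" using assms by (auto simp: mem_sclass_iff)
qed

lemma srep_sclass:
  assumes "A \<in> Dirs"
  shows "srep (sclass A) \<in> Dirs" and "scut (srep (sclass A)) = scut A"
proof -
  have "A \<in> sclass A" using assms by (simp add: mem_sclass_iff)
  then have "srep (sclass A) \<in> sclass A" unfolding srep_def by (rule someI)
  then show "srep (sclass A) \<in> Dirs" "scut (srep (sclass A)) = scut A"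
    by (simp_all add: mem_sclass_iff)
qed

lemma SC_srep:
  assumes "u \<in> SC"
  shows "srep u \<in> Dirs" and "sclass (srep u) = u"
proof -
  obtain A where A: "A \<in> Dirs" "u = sclass A"
    using assms unfolding SC_def sclass_def by (auto elim: quotientE)
  then show "srep u \<in> Dirs" "sclass (srep u) = u"
    using srep_sclass[OF A(1)] sclass_eq_iff by auto
qed

lemma sle_sclass_iff: "A \<in> Dirs \<Longrightarrow> B \<in> Dirs \<Longrightarrow> sle (sclass A) (sclass B) \<longleftrightarrow> dir_le A B"
  unfolding sle_def dir_le_def by (simp add: srep_sclass)

lemma sclass_eqI: "A \<in> Dirs \<Longrightarrow> B \<in> Dirs \<Longrightarrow> dir_le A B \<Longrightarrow> dir_le B A \<Longrightarrow> sclass A = sclass B"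
  by (simp add: sclass_eq_iff scut_eq_iff)

lemma dir_le_srep_sclass:
  assumes "A \<in> Dirs"
  shows "dir_le A (srep (sclass A))" and "dir_le (srep (sclass A)) A"
  using srep_sclass(2)[OF assms] by (simp_all add: dir_le_def)

lemma SC_eq_sclass_image: "SC = sclass ` Dirs"
  unfolding SC_def sclass_def quotient_def by blast

lemma sle_antisym:
  assumes "u \<in> SC" "v \<in> SC" "sle u v" "sle v u"
  shows "u = v"
proof -
  have "dir_le (srep u) (srep v)" "dir_le (srep v) (srep u)"
    using assms sle_sclass_iff[of "srep u" "srep v"] sle_sclass_iff[of "srep v" "srep u"]
    by (simp_all add: SC_srep)
  then have "scut (srep u) = scut (srep v)" by (simp add: scut_eq_iff)
  then have "sclass (srep u) = sclass (srep v)"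
    using sclass_eq_iff SC_srep(1) assms(1,2) by blast
  then show ?thesis using SC_srep(2) assms(1,2) by metis
qed

lemma is_slub_unique: "is_slub S u \<Longrightarrow> is_slub S v \<Longrightarrow> u = v"
  unfolding is_slub_def using sle_antisym by meson

definition sbelow :: "'a::dc_riesz_space set set \<Rightarrow> 'a set" where
  "sbelow u = below (srep u)"

lemma sbelow_sclass: "A \<in> Dirs \<Longrightarrow> sbelow (sclass A) = below A"
  unfolding sbelow_def below_def by (simp add: srep_sclass)

lemma sle_sclass_left_iff:
  assumes "A \<in> Dirs" "w \<in> SC"
  shows "sle (sclass A) w \<longleftrightarrow> A \<subseteq> sbelow w"
proof -
  have "sle (sclass A) w \<longleftrightarrow> dir_le A (srep w)"
    using sle_sclass_iff[OF assms(1) SC_srep(1)[OF assms(2)]] by (simp add: SC_srep assms(2))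
  also have "\<dots> \<longleftrightarrow> A \<subseteq> sbelow w"
    unfolding sbelow_def
    by (rule dir_le_iff_subset_below[OF DirsD(1)[OF SC_srep(1)[OF assms(2)]] DirsD(1)[OF assms(1)]])
  finally show ?thesis .
qed

lemma sle_semb_iff: "w \<in> SC \<Longrightarrow> sle (semb x) w \<longleftrightarrow> x \<in> sbelow w"
  unfolding semb_eq_sclass by (simp add: sle_sclass_left_iff singleton_Dirs)

lemma sle_semb_semb_iff: "sle (semb x) (semb y) \<longleftrightarrow> x \<le> y"
  using sle_semb_iff[OF semb_in_SC, of x y]
  by (simp add: semb_eq_sclass sbelow_sclass[OF singleton_Dirs] below_singleton)

lemma subset_sbelow_sclass: "A \<in> Dirs \<Longrightarrow> A \<subseteq> sbelow (sclass A)"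
  by (simp add: sbelow_sclass subset_below)

lemma sbelow_mono:
  assumes "u \<in> SC" "w \<in> SC" "sle u w"
  shows "sbelow u \<subseteq> sbelow w"
proof -
  have "dir_le (srep u) (srep w)"
    using assms sle_sclass_iff[of "srep u" "srep w"] by (simp add: SC_srep)
  then show ?thesis
    unfolding sbelow_def by (rule below_mono[OF _ DirsD(1)[OF SC_srep(1)[OF assms(2)]]])
qed

lemma sbelow_sup_closed: "u \<in> SC \<Longrightarrow> x \<in> sbelow u \<Longrightarrow> y \<in> sbelow u \<Longrightarrow> sup x y \<in> sbelow u"
  unfolding sbelow_def by (rule below_sup_closed[OF DirsD(1)[OF SC_srep(1)]])

lemma sbelow_down_closed: "u \<in> SC \<Longrightarrow> x \<in> sbelow u \<Longrightarrow> y \<le> x \<Longrightarrow> y \<in> sbelow u"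
  unfolding sbelow_def by (rule below_down_closed[OF DirsD(1)[OF SC_srep(1)]])

lemma sdir_semb_image: "A \<in> Dirs \<Longrightarrow> sdir (semb ` A)"
  unfolding sdir_def by (auto simp: sle_semb_semb_iff dest: DirsD(2))

section \<open>Suprema in the sup-completion\<close>

inductive_set sup_closure :: "'a::semilattice_sup set \<Rightarrow> 'a set" for A where
  base: "a \<in> A \<Longrightarrow> a \<in> sup_closure A"
| sup: "x \<in> sup_closure A \<Longrightarrow> y \<in> sup_closure A \<Longrightarrow> sup x y \<in> sup_closure A"

lemma sup_closure_subset:
  assumes "\<And>x y. x \<in> Z \<Longrightarrow> y \<in> Z \<Longrightarrow> sup x y \<in> Z" "A \<subseteq> Z"
  shows "sup_closure A \<subseteq> Z"
proof
  fix x assume "x \<in> sup_closure A"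
  then show "x \<in> Z" by induct (use assms in auto)
qed

lemma sup_closure_le: "x \<in> sup_closure A \<Longrightarrow> (\<And>a. a \<in> A \<Longrightarrow> a \<le> z) \<Longrightarrow> x \<le> z"
  by (induct rule: sup_closure.induct) auto

lemma sup_closure_Dirs: "A \<noteq> {} \<Longrightarrow> sup_closure A \<in> Dirs"
proof (rule DirsI)
  fix a b assume "a \<in> sup_closure A" "b \<in> sup_closure A"
  then show "\<exists>c\<in>sup_closure A. a \<le> c \<and> b \<le> c"
    by (intro bexI[of _ "sup a b"]) (auto intro: sup_closure.sup)
qed (auto intro: sup_closure.base)

lemma is_slub_sclassI:
  assumes B: "B \<in> Dirs" and S: "S \<subseteq> SC" and ub: "\<And>v. v \<in> S \<Longrightarrow> sle v (sclass B)"
    and gen: "B \<subseteq> sup_closure (\<Union> (sbelow ` S))"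
  shows "is_slub S (sclass B)"
  unfolding is_slub_def
proof (intro conjI ballI impI)
  show "sclass B \<in> SC" by (rule sclass_in_SC[OF B])
  show "sle v (sclass B)" if "v \<in> S" for v using ub[OF that] .
  fix w assume w: "w \<in> SC" and ubw: "\<forall>v\<in>S. sle v w"
  have "\<Union> (sbelow ` S) \<subseteq> sbelow w"
    using sbelow_mono[OF _ w] S ubw by blast
  then have "sup_closure (\<Union> (sbelow ` S)) \<subseteq> sbelow w"
    by (intro sup_closure_subset sbelow_sup_closed[OF w])
  then show "sle (sclass B) w"
    using gen sle_sclass_left_iff[OF B w] by blast
qed

lemma is_slub_semb_image_Dirs: "A \<in> Dirs \<Longrightarrow> is_slub (semb ` A) (sclass A)"
proof (rule is_slub_sclassI)
  assume A: "A \<in> Dirs"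
  show "semb ` A \<subseteq> SC" using semb_in_SC by blast
  show "sle v (sclass A)" if "v \<in> semb ` A" for v
    using that subset_sbelow_sclass[OF A] sle_semb_iff[OF sclass_in_SC[OF A]] by auto
  have "A \<subseteq> \<Union> (sbelow ` semb ` A)"
    using sle_semb_iff[OF semb_in_SC] sle_semb_semb_iff by blast
  then show "A \<subseteq> sup_closure (\<Union> (sbelow ` semb ` A))"
    using sup_closure.base by blast
qed

lemma is_slub_semb_image: "A \<noteq> {} \<Longrightarrow> is_slub (semb ` A) (sclass (sup_closure A))"
proof (rule is_slub_sclassI)
  assume A: "A \<noteq> {}"
  let ?B = "sup_closure A"
  have B: "?B \<in> Dirs" by (rule sup_closure_Dirs[OF A])
  show "semb ` A \<subseteq> SC" using semb_in_SC by blast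
  show "sle v (sclass ?B)" if "v \<in> semb ` A" for v
    using that sup_closure.base subset_sbelow_sclass[OF B] sle_semb_iff[OF sclass_in_SC[OF B]]
    by blast
  have "A \<subseteq> \<Union> (sbelow ` semb ` A)"
    using sle_semb_iff[OF semb_in_SC] sle_semb_semb_iff by blast
  then show "?B \<subseteq> sup_closure (\<Union> (sbelow ` semb ` A))"
    by (intro sup_closure_subset) (auto intro: sup_closure.intros)
qed (rule sup_closure_Dirs)

lemma is_slub_sclass_Union:
  assumes "\<A> \<subseteq> Dirs" "\<Union> \<A> \<in> Dirs"
  shows "is_slub (sclass ` \<A>) (sclass (\<Union> \<A>))"
proof (rule is_slub_sclassI)
  show "sclass ` \<A> \<subseteq> SC" using assms(1) sclass_in_SC by blast
  show "sle v (sclass (\<Union> \<A>))" if v: "v \<in> sclass ` \<A>" for v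
  proof -
    obtain A where A: "A \<in> \<A>" "v = sclass A" using v by blast
    have "A \<subseteq> sbelow (sclass (\<Union> \<A>))"
      using A(1) subset_sbelow_sclass[OF assms(2)] by blast
    then show ?thesis
      using A sle_sclass_left_iff[OF _ sclass_in_SC[OF assms(2)]] assms(1) by blast
  qed
  have "\<Union> \<A> \<subseteq> \<Union> (sbelow ` sclass ` \<A>)"
    using assms(1) subset_sbelow_sclass by fastforce
  then show "\<Union> \<A> \<subseteq> sup_closure (\<Union> (sbelow ` sclass ` \<A>))"
    using sup_closure.base by blast
qed (rule assms(2))

lemma image_set_plus:
  assumes "\<And>a b. a \<in> A \<Longrightarrow> b \<in> B \<Longrightarrow> f (a + b) = f a + f b"
  shows "f ` (A + B) = f ` A + f ` B"
proof (intro equalityI subsetI)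
  fix y assume "y \<in> f ` (A + B)"
  then obtain a b where "a \<in> A" "b \<in> B" "y = f (a + b)" by (auto elim!: set_plus_elim)
  then show "y \<in> f ` A + f ` B" using assms by (auto intro: set_plus_intro)
next
  fix y assume "y \<in> f ` A + f ` B"
  then obtain a b where "a \<in> A" "b \<in> B" "y = f a + f b" by (auto elim!: set_plus_elim)
  then show "y \<in> f ` (A + B)" using assms by (metis image_eqI set_plus_intro)
qed

lemma dir_le_set_plus:
  fixes A B A' B' :: "'a::dc_riesz_space set"
  assumes ne: "A \<noteq> {}" "B \<noteq> {}" "A' \<noteq> {}" "B' \<noteq> {}"
    and le: "dir_le A A'" "dir_le B B'"
  shows "dir_le (A + B) (A' + B')"
proof -
  have ne_sum: "A' + B' \<noteq> {}" "A + B \<noteq> {}" using ne by (auto simp: set_plus_def)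
  have "a + b \<in> below (A' + B')" if ab: "a \<in> A" "b \<in> B" for a b
  proof -
    have "a \<in> below A'" "b \<in> below B'"
      using ab le dir_le_iff_subset_below[OF ne(3,1)] dir_le_iff_subset_below[OF ne(4,2)] by blast+
    then have a: "scut A' a = a" and b: "scut B' b = b" unfolding below_def by simp_all
    define T where "T = scut (A' + B') (a + b)"
    have key: "inf a a' + inf b b' \<le> T" if "a' \<in> A'" "b' \<in> B'" for a' b'
    proof -
      have "inf a a' + inf b b' \<le> inf (a + b) (a' + b')"
        by (intro le_infI add_mono) simp_all
      also have "\<dots> \<le> T" unfolding T_def using that by (intro inf_le_scut set_plus_intro)
      finally show ?thesis .
    qed
    have "inf b b' \<le> T - scut A' a" if b': "b' \<in> B'" for b'
    proof -
      have "inf a a' \<le> T - inf b b'" if "a' \<in> A'" for a'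
        using key[OF that b'] by (rule le_diff_eq[THEN iffD2])
      then have "scut A' a \<le> T - inf b b'"
        unfolding scut_def[of A'] by (rule cSUP_least[OF ne(3)])
      then show ?thesis by (metis le_diff_eq add.commute)
    qed
    then have "scut B' b \<le> T - scut A' a"
      unfolding scut_def[of B'] by (rule cSUP_least[OF ne(4)])
    then have "a + b \<le> T" using a b by (metis le_diff_eq add.commute)
    then show ?thesis unfolding T_def by (rule belowI[OF ne_sum(1)])
  qed
  then show ?thesis
    using dir_le_iff_subset_below[OF ne_sum] by (auto elim!: set_plus_elim)
qed

lemma sadd_sclass:
  assumes "A \<in> Dirs" "B \<in> Dirs"
  shows "sadd (sclass A) (sclass B) = sclass (A + B)"
proof -
  let ?A' = "srep (sclass A)" and ?B' = "srep (sclass B)"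
  have "sadd (sclass A) (sclass B) = sclass (?A' + ?B')"
    unfolding sadd_def sclass_def by (rule arg_cong[where f = "\<lambda>X. srel `` {X}"]) (auto simp: set_plus_def)
  also have "\<dots> = sclass (A + B)"
    using assms srep_sclass(1)[OF assms(1)] srep_sclass(1)[OF assms(2)]
    by (intro sclass_eqI Dirs_set_plus dir_le_set_plus dir_le_srep_sclass DirsD(1))
  finally show ?thesis .
qed

lemma dir_le_scaleR:
  fixes A B :: "'a::dc_riesz_space set"
  assumes ne: "A \<noteq> {}" "B \<noteq> {}" and t: "0 < t" and le: "dir_le A B"
  shows "dir_le ((*\<^sub>R) t ` A) ((*\<^sub>R) t ` B)"
proof -
  have "t *\<^sub>R a \<in> below ((*\<^sub>R) t ` B)" if a: "a \<in> A" for a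
  proof -
    have "a \<in> below B" using a le dir_le_iff_subset_below[OF ne(2,1)] by blast
    then have "scut B a = a" unfolding below_def by simp
    define T where "T = scut ((*\<^sub>R) t ` B) (t *\<^sub>R a)"
    have "inf a b \<le> T /\<^sub>R t" if "b \<in> B" for b
    proof -
      have "t *\<^sub>R inf a b \<le> inf (t *\<^sub>R a) (t *\<^sub>R b)"
        using t by (intro le_infI scaleR_left_mono) auto
      also have "\<dots> \<le> T" unfolding T_def using that by (intro inf_le_scut imageI)
      finally show ?thesis using t by (simp add: pos_le_divideR_eq)
    qed
    then have "scut B a \<le> T /\<^sub>R t" unfolding scut_def[of B] using ne(2) by (intro cSUP_least) auto
    then show ?thesis
      unfolding T_def using \<open>scut B a = a\<close> t ne(2) by (intro belowI) (auto simp: pos_le_divideR_eq)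
  qed
  then show ?thesis using dir_le_iff_subset_below[of "(*\<^sub>R) t ` B" "(*\<^sub>R) t ` A"] ne by auto
qed

lemma Dirs_scaleR: "A \<in> Dirs \<Longrightarrow> 0 \<le> t \<Longrightarrow> (*\<^sub>R) t ` A \<in> Dirs"
  by (rule Dirs_image) (auto intro: mono_onI scaleR_left_mono)

lemma ssmul_sclass:
  assumes A: "A \<in> Dirs" and t: "0 \<le> t"
  shows "ssmul t (sclass A) = sclass ((*\<^sub>R) t ` A)"
proof (cases "t = 0")
  case True
  have "(*\<^sub>R) t ` X = {0}" if "X \<in> Dirs" for X :: "'a set"
    using True DirsD(1)[OF that] by auto
  then show ?thesis
    unfolding ssmul_def sclass_def[symmetric] using A srep_sclass(1)[OF A] by simp
next
  case False
  then have "0 < t" using t by simp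
  have A': "srep (sclass A) \<in> Dirs" by (rule srep_sclass(1)[OF A])
  show ?thesis
    unfolding ssmul_def sclass_def[symmetric]
    using A A' t \<open>0 < t\<close>
    by (intro sclass_eqI Dirs_scaleR dir_le_scaleR dir_le_srep_sclass DirsD(1))
qed

section \<open>Order continuity on directed sets\<close>

definition tail_filter :: "'a::order set \<Rightarrow> 'a filter" where
  "tail_filter A = (INF a\<in>A. principal {b\<in>A. a \<le> b})"

lemma eventually_tail_filter:
  assumes "A \<in> Dirs"
  shows "eventually P (tail_filter A) \<longleftrightarrow> (\<exists>a\<in>A. \<forall>b\<in>A. a \<le> b \<longrightarrow> P b)"
proof -
  have "eventually P (tail_filter A) \<longleftrightarrow> (\<exists>a\<in>A. eventually P (principal {b\<in>A. a \<le> b}))"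
    unfolding tail_filter_def
  proof (rule eventually_INF_base)
    show "A \<noteq> {}" by (rule DirsD(1)[OF assms])
    fix a b assume "a \<in> A" "b \<in> A"
    then obtain c where "c \<in> A" "a \<le> c" "b \<le> c" using DirsD(2)[OF assms] by blast
    then show "\<exists>c\<in>A. principal {x \<in> A. c \<le> x} \<le>
        inf (principal {x \<in> A. a \<le> x}) (principal {x \<in> A. b \<le> x})"
      by (intro bexI[of _ c]) (auto intro: order_trans)
  qed
  then show ?thesis by (simp add: eventually_principal) blast
qed

lemma tail_filter_neq_bot: "A \<in> Dirs \<Longrightarrow> tail_filter A \<noteq> bot"
  using eventually_tail_filter[of A "\<lambda>_. False"] by (auto simp: eventually_False[symmetric])

lemma ord_conv_tail_filter_Sup:
  fixes A :: "'a::dc_riesz_space set"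
  assumes A: "A \<in> Dirs" and bdd: "bdd_above A"
  shows "ord_conv (tail_filter A) (Sup A)"
  unfolding ord_conv_def
proof (intro exI[of _ "(\<lambda>a. Sup A - a) ` A"] conjI)
  have ub: "a \<le> Sup A" if "a \<in> A" for a using cSup_upper[OF that bdd] .
  show "(\<lambda>a. Sup A - a) ` A \<noteq> {}" using DirsD(1)[OF A] by simp
  show "downdir ((\<lambda>a. Sup A - a) ` A)" unfolding downdir_def
  proof (intro ballI)
    fix x y assume "x \<in> (\<lambda>a. Sup A - a) ` A" "y \<in> (\<lambda>a. Sup A - a) ` A"
    then obtain a b where ab: "a \<in> A" "b \<in> A" "x = Sup A - a" "y = Sup A - b" by auto
    then obtain c where "c \<in> A" "a \<le> c" "b \<le> c" using DirsD(2)[OF A] by blast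
    then show "\<exists>z\<in>(\<lambda>a. Sup A - a) ` A. z \<le> x \<and> z \<le> y"
      using ab by (intro bexI[of _ "Sup A - c"]) (auto simp: diff_left_mono)
  qed
  show "is_glb ((\<lambda>a. Sup A - a) ` A) 0" unfolding is_glb_def
  proof (intro conjI allI impI ballI)
    fix d assume "d \<in> (\<lambda>a. Sup A - a) ` A"
    then show "0 \<le> d" using ub by auto
  next
    fix l assume "\<forall>d\<in>(\<lambda>a. Sup A - a) ` A. l \<le> d"
    then have "a \<le> Sup A - l" if "a \<in> A" for a using that by (auto simp: le_diff_eq add.commute)
    then have "Sup A \<le> Sup A - l" using DirsD(1)[OF A] by (intro cSup_least) auto
    then show "l \<le> 0" by (simp add: le_diff_eq)
  qed
  show "\<forall>d\<in>(\<lambda>a. Sup A - a) ` A. eventually (\<lambda>y. sup (y - Sup A) (Sup A - y) \<le> d) (tail_filter A)"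
  proof
    fix d assume "d \<in> (\<lambda>a. Sup A - a) ` A"
    then obtain a where a: "a \<in> A" "d = Sup A - a" by auto
    have "sup (b - Sup A) (Sup A - b) \<le> d" if "b \<in> A" "a \<le> b" for b
    proof (rule sup_least)
      have "b - Sup A \<le> 0" using ub[OF that(1)] by simp
      also have "0 \<le> Sup A - a" using ub[OF a(1)] by simp
      finally show "b - Sup A \<le> d" using a by simp
      show "Sup A - b \<le> d" using a that by (simp add: diff_left_mono)
    qed
    then show "eventually (\<lambda>y. sup (y - Sup A) (Sup A - y) \<le> d) (tail_filter A)"
      unfolding eventually_tail_filter[OF A] using a by blast
  qed
qed

lemma ord_conv_le:
  assumes conv: "ord_conv F y" and F: "F \<noteq> bot" and ev: "eventually (\<lambda>z. z \<le> w) F"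
  shows "y \<le> w"
proof -
  obtain D where D: "is_glb D 0" "\<forall>d\<in>D. eventually (\<lambda>z. sup (z - y) (y - z) \<le> d) F"
    using conv unfolding ord_conv_def by blast
  have "y - w \<le> d" if "d \<in> D" for d
  proof -
    have "eventually (\<lambda>z. sup (z - y) (y - z) \<le> d \<and> z \<le> w) F"
      using D(2) that ev by (intro eventually_conj) auto
    then obtain z where "sup (z - y) (y - z) \<le> d" "z \<le> w"
      using eventually_happens'[OF F] by blast
    then have "y - z \<le> d" "y - w \<le> y - z" by (auto simp: diff_left_mono)
    then show ?thesis by order
  qed
  then have "y - w \<le> 0" using D(1) unfolding is_glb_def by blast
  then show ?thesis by simp
qed

lemma ord_conv_tail_filter_cSup:
  fixes g :: "'a::dc_riesz_space \<Rightarrow> 'b::dc_riesz_space"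
  assumes A: "A \<in> Dirs" and ub: "\<forall>a\<in>A. g a \<le> y"
    and conv: "ord_conv (filtermap g (tail_filter A)) y"
  shows "y = Sup (g ` A)"
proof (rule sym, rule cSup_eq_non_empty)
  show "g ` A \<noteq> {}" using DirsD(1)[OF A] by simp
  show "\<And>x. x \<in> g ` A \<Longrightarrow> x \<le> y" using ub by auto
  fix w assume "\<And>x. x \<in> g ` A \<Longrightarrow> x \<le> w"
  then have "eventually (\<lambda>z. z \<le> w) (filtermap g (tail_filter A))"
    unfolding eventually_filtermap eventually_tail_filter[OF A] using DirsD(1)[OF A] by blast
  then show "y \<le> w"
    using ord_conv_le[OF conv] tail_filter_neq_bot[OF A] by (simp add: filtermap_bot_iff)
qed

lemma order_continuous_cSup:
  fixes f :: "'a::dc_riesz_space \<Rightarrow> 'b::dc_riesz_space"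
  assumes "mono f" "order_continuous f" "A \<in> Dirs" "bdd_above A"
  shows "f (Sup A) = Sup (f ` A)"
proof (rule ord_conv_tail_filter_cSup[OF assms(3)])
  show "\<forall>a\<in>A. f a \<le> f (Sup A)" using assms(1,4) by (auto intro: monoD cSup_upper)
  show "ord_conv (filtermap f (tail_filter A)) (f (Sup A))"
    using assms(2) tail_filter_neq_bot[OF assms(3)] ord_conv_tail_filter_Sup[OF assms(3,4)]
    unfolding order_continuous_def by blast
qed

lemma order_continuous_pos_cSup:
  fixes f :: "'a::dc_riesz_space \<Rightarrow> 'b::dc_riesz_space"
  assumes "mono_on {x. 0 \<le> x} f" "order_continuous_pos f" "A \<in> Dirs" "bdd_above A"
    and nonneg: "\<forall>a\<in>A. 0 \<le> a"
  shows "f (Sup A) = Sup (f ` A)"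
proof (rule ord_conv_tail_filter_cSup[OF assms(3)])
  obtain a0 where a0: "a0 \<in> A" using DirsD(1)[OF assms(3)] by blast
  have Sup_nonneg: "0 \<le> Sup A" using nonneg a0 cSup_upper[OF a0 assms(4)] by (meson order_trans)
  show "\<forall>a\<in>A. f a \<le> f (Sup A)"
    using assms(1,4) nonneg Sup_nonneg by (auto intro: mono_onD cSup_upper)
  have "eventually (\<lambda>y. 0 \<le> y) (tail_filter A)"
    unfolding eventually_tail_filter[OF assms(3)] using a0 nonneg by blast
  then show "ord_conv (filtermap f (tail_filter A)) (f (Sup A))"
    using assms(2) tail_filter_neq_bot[OF assms(3)] ord_conv_tail_filter_Sup[OF assms(3,4)] Sup_nonneg
    unfolding order_continuous_pos_def by blast
qed

section \<open>The extension\<close>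

definition SC_over :: "'a::dc_riesz_space set \<Rightarrow> 'a set set set" where
  "SC_over P = {u \<in> SC. sbelow u \<inter> P \<noteq> {}}"

lemma SC_over_UNIV: "SC_over UNIV = SC"
  unfolding SC_over_def using SC_srep(1) DirsD(1) subset_below
  by (fastforce simp: sbelow_def)

lemma SC_over_nonneg: "SC_over {x. 0 \<le> x} = SCpos"
proof -
  have "sbelow u \<inter> {x. 0 \<le> x} \<noteq> {} \<longleftrightarrow> sle (semb 0) u" if u: "u \<in> SC" for u
    using sbelow_down_closed[OF u] sle_semb_iff[OF u] by blast
  then show ?thesis unfolding SC_over_def SCpos_def by auto
qed

locale sup_extension =
  fixes P :: "'a::dc_riesz_space set" and Q :: "'b::dc_riesz_space set" and f :: "'a \<Rightarrow> 'b"
  assumes P_upward: "x \<in> P \<Longrightarrow> x \<le> y \<Longrightarrow> y \<in> P"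
    and P_inf: "x \<in> P \<Longrightarrow> y \<in> P \<Longrightarrow> inf x y \<in> P"
    and f_into: "x \<in> P \<Longrightarrow> f x \<in> Q"
    and f_mono: "mono_on P f"
    and f_cSup: "A \<subseteq> P \<Longrightarrow> A \<in> Dirs \<Longrightarrow> bdd_above A \<Longrightarrow> f (Sup A) = Sup (f ` A)"
begin

definition lower :: "'a set set \<Rightarrow> 'a set" where
  "lower u = sbelow u \<inter> P"

definition sup_ext :: "'a set set \<Rightarrow> 'b set set" where
  "sup_ext u = sclass (f ` lower u)"

lemma lower_subset: "lower u \<subseteq> P"
  unfolding lower_def by blast

lemma lower_Dirs:
  assumes u: "u \<in> SC_over P"
  shows "lower u \<in> Dirs"
proof (rule DirsI)
  show "lower u \<noteq> {}" using u unfolding SC_over_def lower_def by blast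
  fix a b assume "a \<in> lower u" "b \<in> lower u"
  then have "sup a b \<in> lower u"
    using u sbelow_sup_closed P_upward[OF _ sup_ge1] unfolding lower_def SC_over_def by blast
  then show "\<exists>c\<in>lower u. a \<le> c \<and> b \<le> c" by (intro bexI[of _ "sup a b"]) simp_all
qed

lemma lower_mono: "u \<in> SC \<Longrightarrow> v \<in> SC \<Longrightarrow> sle u v \<Longrightarrow> lower u \<subseteq> lower v"
  unfolding lower_def using sbelow_mono by blast

text \<open>An element of a representative of u lies below its join with any element of lower u,
  and that join is again in lower u.\<close>
lemma sclass_lower:
  assumes u: "u \<in> SC_over P"
  shows "sclass (lower u) = u"
proof -
  have uSC: "u \<in> SC" using u unfolding SC_over_def by blast
  have L: "lower u \<in> Dirs" by (rule lower_Dirs[OF u])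
  have R: "srep u \<in> Dirs" by (rule SC_srep(1)[OF uSC])
  have "dir_le (lower u) (srep u)"
    using dir_le_iff_subset_below[OF DirsD(1)[OF R] DirsD(1)[OF L]]
    unfolding lower_def sbelow_def by blast
  moreover have "srep u \<subseteq> below (lower u)"
  proof
    fix a assume a: "a \<in> srep u"
    obtain p where p: "p \<in> lower u" using DirsD(1)[OF L] by blast
    have "a \<in> sbelow u" using a subset_below unfolding sbelow_def by blast
    then have "sup p a \<in> lower u"
      using p sbelow_sup_closed[OF uSC] P_upward[OF _ sup_ge1] unfolding lower_def by blast
    then show "a \<in> below (lower u)"
      using below_down_closed[OF DirsD(1)[OF L] subsetD[OF subset_below] sup_ge2] by blast
  qed
  then have "dir_le (srep u) (lower u)"
    using dir_le_iff_subset_below[OF DirsD(1)[OF L] DirsD(1)[OF R]] by blast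
  ultimately show ?thesis using sclass_eqI[OF L R] SC_srep(2)[OF uSC] by simp
qed

lemma image_Dirs: "A \<in> Dirs \<Longrightarrow> A \<subseteq> P \<Longrightarrow> f ` A \<in> Dirs"
  using Dirs_image f_mono mono_on_subset by blast

text \<open>For a below [B], order continuity gives f a = sup_{b \<in> B} f (a \<sqinter> b).\<close>
lemma dir_le_image:
  assumes A: "A \<in> Dirs" "A \<subseteq> P" and B: "B \<in> Dirs" "B \<subseteq> P" and le: "dir_le A B"
  shows "dir_le (f ` A) (f ` B)"
proof -
  have fB: "f ` B \<noteq> {}" using DirsD(1)[OF B(1)] by simp
  have "f a \<in> below (f ` B)" if a: "a \<in> A" for a
  proof -
    let ?C = "(\<lambda>b. inf a b) ` B"
    have aP: "a \<in> P" using a A(2) by blast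
    have "a \<in> below B"
      using a le dir_le_iff_subset_below[OF DirsD(1)[OF B(1)] DirsD(1)[OF A(1)]] by blast
    then have "Sup ?C = a" unfolding below_def scut_def by simp
    moreover have CP: "?C \<subseteq> P" using B(2) aP P_inf by blast
    moreover have "?C \<in> Dirs" using B(1) by (rule Dirs_image) (auto intro: mono_onI inf_mono)
    ultimately have fa: "f a = Sup (f ` ?C)" using f_cSup bdd_above_inf_image by metis
    have "f (inf a b) \<in> below (f ` B)" if b: "b \<in> B" for b
    proof -
      have "f (inf a b) \<le> f b" using b B(2) aP P_inf by (intro mono_onD[OF f_mono]) auto
      then show ?thesis using below_down_closed[OF fB subsetD[OF subset_below]] b by blast
    qed
    moreover have "bdd_above (f ` ?C)"
    proof (rule bdd_aboveI[of _ "f a"])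
      fix z assume "z \<in> f ` ?C"
      then obtain b where "b \<in> B" "z = f (inf a b)" by blast
      then show "z \<le> f a" using CP aP by (auto intro!: mono_onD[OF f_mono])
    qed
    ultimately show ?thesis
      unfolding fa using DirsD(1)[OF B(1)] by (intro below_cSup_closed[OF fB]) auto
  qed
  then show ?thesis
    using dir_le_iff_subset_below[of "f ` B" "f ` A"] fB DirsD(1)[OF A(1)] by auto
qed

lemma sclass_in_SC_over: "A \<in> Dirs \<Longrightarrow> A \<subseteq> P \<Longrightarrow> sclass A \<in> SC_over P"
  unfolding SC_over_def using sclass_in_SC subset_sbelow_sclass DirsD(1) by fastforce

lemma sup_ext_sclass:
  assumes A: "A \<in> Dirs" "A \<subseteq> P"
  shows "sup_ext (sclass A) = sclass (f ` A)"
proof -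
  have u: "sclass A \<in> SC_over P" by (rule sclass_in_SC_over[OF A])
  have L: "lower (sclass A) \<in> Dirs" "lower (sclass A) \<subseteq> P"
    using lower_Dirs[OF u] lower_subset by blast+
  have "sclass (lower (sclass A)) = sclass A" by (rule sclass_lower[OF u])
  then have "dir_le (lower (sclass A)) A" "dir_le A (lower (sclass A))"
    using sclass_eq_iff[OF L(1) A(1)] scut_eq_iff by blast+
  then show ?thesis
    unfolding sup_ext_def
    by (intro sclass_eqI image_Dirs dir_le_image L A)
qed

lemma sup_ext_in_SC_over:
  assumes u: "u \<in> SC_over P"
  shows "sup_ext u \<in> SC_over Q"
proof -
  let ?B = "f ` lower u"
  have B: "?B \<in> Dirs" by (rule image_Dirs[OF lower_Dirs[OF u] lower_subset])
  have "?B \<subseteq> sbelow (sclass ?B) \<inter> Q"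
    using subset_sbelow_sclass[OF B] lower_subset f_into by blast
  then show ?thesis
    unfolding sup_ext_def SC_over_def using sclass_in_SC[OF B] DirsD(1)[OF B] by blast
qed

lemma sup_ext_semb: "x \<in> P \<Longrightarrow> sup_ext (semb x) = semb (f x)"
  unfolding semb_eq_sclass using sup_ext_sclass[OF singleton_Dirs, of x] by simp

lemma sup_ext_mono:
  assumes u: "u \<in> SC_over P" and v: "v \<in> SC_over P" and le: "sle u v"
  shows "sle (sup_ext u) (sup_ext v)"
proof -
  have L: "lower u \<in> Dirs" "lower v \<in> Dirs" using lower_Dirs u v by blast+
  have "dir_le (lower u) (lower v)"
    using le sle_sclass_iff[OF L] sclass_lower[OF u] sclass_lower[OF v] by simp
  then show ?thesis
    unfolding sup_ext_def
    using sle_sclass_iff[OF image_Dirs image_Dirs] L lower_subset dir_le_image by metis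
qed

lemma Union_lower_Dirs:
  assumes D: "D \<subseteq> SC_over P" "D \<noteq> {}" "sdir D"
  shows "\<Union> (lower ` D) \<in> Dirs"
proof (rule DirsI)
  obtain v where "v \<in> D" using D(2) by blast
  then show "\<Union> (lower ` D) \<noteq> {}" using lower_Dirs[THEN DirsD(1)] D(1) by blast
  fix a b assume "a \<in> \<Union> (lower ` D)" "b \<in> \<Union> (lower ` D)"
  then obtain v1 v2 where v: "v1 \<in> D" "v2 \<in> D" "a \<in> lower v1" "b \<in> lower v2" by blast
  obtain w where w: "w \<in> D" "sle v1 w" "sle v2 w" using D(3) v(1,2) unfolding sdir_def by blast
  have SC: "v1 \<in> SC" "v2 \<in> SC" "w \<in> SC" using D(1) v(1,2) w(1) unfolding SC_over_def by blast+
  have "a \<in> lower w" "b \<in> lower w"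
    using lower_mono[OF SC(1,3) w(2)] lower_mono[OF SC(2,3) w(3)] v(3,4) by blast+
  then obtain c where "c \<in> lower w" "a \<le> c" "b \<le> c"
    using DirsD(2)[OF lower_Dirs] D(1) w(1) by blast
  then show "\<exists>c\<in>\<Union> (lower ` D). a \<le> c \<and> b \<le> c" using w(1) by blast
qed

text \<open>Both suprema are classes of unions of representatives.\<close>
lemma left_oc_sup_ext: "left_oc (SC_over P) sup_ext"
  unfolding left_oc_def
proof (intro allI impI)
  fix D u assume D: "D \<subseteq> SC_over P" "D \<noteq> {}" "sdir D" and "u \<in> SC_over P" and u: "is_slub D u"
  let ?W = "\<Union> (lower ` D)"
  have W: "?W \<in> Dirs" "?W \<subseteq> P" using Union_lower_Dirs[OF D] lower_subset by blast+
  have "sclass ` lower ` D = D"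
    using sclass_lower D(1) by (force simp: image_image)
  moreover have "lower ` D \<subseteq> Dirs" using lower_Dirs D(1) by blast
  ultimately have "is_slub D (sclass ?W)" using is_slub_sclass_Union W(1) by metis
  then have "sup_ext u = sclass (f ` ?W)"
    using is_slub_unique[OF u] sup_ext_sclass[OF W] by simp
  moreover have "is_slub (sup_ext ` D) (sclass (f ` ?W))"
  proof -
    have "sup_ext ` D = sclass ` (\<lambda>v. f ` lower v) ` D" unfolding sup_ext_def image_image ..
    moreover have "f ` ?W = \<Union> ((\<lambda>v. f ` lower v) ` D)" by blast
    moreover have "(\<lambda>v. f ` lower v) ` D \<subseteq> Dirs"
      using image_Dirs[OF lower_Dirs lower_subset] D(1) by blast
    ultimately show ?thesis using is_slub_sclass_Union image_Dirs[OF W] by metis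
  qed
  ultimately show "is_slub (sup_ext ` D) (sup_ext u)" by simp
qed

lemma left_oc_sclass:
  assumes h: "left_oc (SC_over P) h" "\<And>x. x \<in> P \<Longrightarrow> h (semb x) = semb (f x)"
    and A: "A \<in> Dirs" "A \<subseteq> P"
  shows "h (sclass A) = sclass (f ` A)"
proof -
  have "semb ` A \<subseteq> SC_over P"
    using sclass_in_SC_over[OF singleton_Dirs] A(2) unfolding semb_eq_sclass by blast
  then have "is_slub (h ` semb ` A) (h (sclass A))"
    using h(1) DirsD(1)[OF A(1)] sdir_semb_image[OF A(1)] sclass_in_SC_over[OF A]
      is_slub_semb_image_Dirs[OF A(1)]
    unfolding left_oc_def by blast
  moreover have "h ` semb ` A = semb ` f ` A"
    using h(2) A(2) by (force simp: image_image)
  ultimately show ?thesis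
    using is_slub_unique is_slub_semb_image_Dirs[OF image_Dirs[OF A]] by metis
qed

lemma sup_ext_unique:
  assumes "left_oc (SC_over P) h" "\<And>x. x \<in> P \<Longrightarrow> h (semb x) = semb (f x)" "u \<in> SC_over P"
  shows "h u = sup_ext u"
  using left_oc_sclass[OF assms(1,2) lower_Dirs[OF assms(3)] lower_subset] sclass_lower[OF assms(3)]
  unfolding sup_ext_def by simp

lemma sadditive_sup_ext:
  assumes P_add: "\<And>x y. x \<in> P \<Longrightarrow> y \<in> P \<Longrightarrow> x + y \<in> P"
    and f_add: "\<And>x y. x \<in> P \<Longrightarrow> y \<in> P \<Longrightarrow> f (x + y) = f x + f y"
  shows "sadditive (SC_over P) sup_ext"
  unfolding sadditive_def
proof (intro ballI)
  fix u v assume u: "u \<in> SC_over P" and v: "v \<in> SC_over P"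
  have L: "lower u \<in> Dirs" "lower v \<in> Dirs" using lower_Dirs u v by blast+
  have LP: "lower u + lower v \<subseteq> P"
    using lower_subset[of u] lower_subset[of v] P_add by (auto elim!: set_plus_elim)
  have image_sum: "f ` (lower u + lower v) = f ` lower u + f ` lower v"
    using lower_subset[of u] lower_subset[of v] f_add by (intro image_set_plus) blast
  have "sup_ext (sadd u v) = sup_ext (sclass (lower u + lower v))"
    using sadd_sclass[OF L] sclass_lower[OF u] sclass_lower[OF v] by simp
  also have "\<dots> = sclass (f ` (lower u + lower v))"
    by (rule sup_ext_sclass[OF Dirs_set_plus[OF L] LP])
  also have "\<dots> = sclass (f ` lower u + f ` lower v)"
    by (simp only: image_sum)
  also have "\<dots> = sadd (sup_ext u) (sup_ext v)"
    unfolding sup_ext_def using sadd_sclass[OF image_Dirs image_Dirs] L lower_subset by metis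
  finally show "sup_ext (sadd u v) = sadd (sup_ext u) (sup_ext v)" .
qed

lemma sposhom_sup_ext:
  assumes P_scaleR: "\<And>t x. 0 \<le> t \<Longrightarrow> x \<in> P \<Longrightarrow> t *\<^sub>R x \<in> P"
    and f_scaleR: "\<And>t x. 0 \<le> t \<Longrightarrow> x \<in> P \<Longrightarrow> f (t *\<^sub>R x) = t *\<^sub>R f x"
  shows "sposhom (SC_over P) sup_ext"
  unfolding sposhom_def
proof (intro allI ballI impI)
  fix t :: real and u assume u: "u \<in> SC_over P" and t: "0 \<le> t"
  have L: "lower u \<in> Dirs" by (rule lower_Dirs[OF u])
  have LP: "(*\<^sub>R) t ` lower u \<subseteq> P" using lower_subset P_scaleR t by blast
  have "sup_ext (ssmul t u) = sup_ext (sclass ((*\<^sub>R) t ` lower u))"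
    using ssmul_sclass[OF L t] sclass_lower[OF u] by simp
  also have "\<dots> = sclass (f ` (*\<^sub>R) t ` lower u)"
    by (rule sup_ext_sclass[OF Dirs_scaleR[OF L t] LP])
  also have "f ` (*\<^sub>R) t ` lower u = (*\<^sub>R) t ` f ` lower u"
    unfolding image_image using lower_subset f_scaleR t by (intro image_cong) auto
  also have "sclass \<dots> = ssmul t (sup_ext u)"
    unfolding sup_ext_def using ssmul_sclass[OF image_Dirs[OF L lower_subset] t] by simp
  finally show "sup_ext (ssmul t u) = ssmul t (sup_ext u)" .
qed

end

lemma sup_extension_UNIV:
  fixes f :: "'a::dc_riesz_space \<Rightarrow> 'b::dc_riesz_space"
  assumes "mono f" "order_continuous f"
  shows "sup_extension UNIV UNIV f"
  by unfold_locales (use assms order_continuous_cSup in \<open>auto intro: mono_on_subset\<close>)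

lemma sup_extension_nonneg:
  fixes f :: "'a::dc_riesz_space \<Rightarrow> 'b::dc_riesz_space"
  assumes "\<forall>x. 0 \<le> x \<longrightarrow> 0 \<le> f x" "mono_on {x. 0 \<le> x} f" "order_continuous_pos f"
  shows "sup_extension {x. 0 \<le> x} {x. 0 \<le> x} f"
proof unfold_locales
  fix A :: "'a set" assume "A \<subseteq> {x. 0 \<le> x}" "A \<in> Dirs" "bdd_above A"
  then show "f (Sup A) = Sup (f ` A)" using order_continuous_pos_cSup[OF assms(2,3)] by blast
qed (use assms in \<open>auto intro: order_trans\<close>)

lemma is_sup_ext_exists_unique:
  fixes f :: "'a::dc_riesz_space \<Rightarrow> 'b::dc_riesz_space"
  assumes "mono f" "order_continuous f"
  shows "\<exists>g. is_sup_ext f g \<and> (\<forall>h. is_sup_ext f h \<longrightarrow> (\<forall>u\<in>SC. h u = g u)) \<and>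
           (additive_map f \<longrightarrow> sadditive SC g) \<and> (poshom_map f \<longrightarrow> sposhom SC g)"
proof -
  interpret sup_extension UNIV UNIV f by (rule sup_extension_UNIV[OF assms])
  have "is_sup_ext f sup_ext"
    unfolding is_sup_ext_def sincr_def
    using sup_ext_in_SC_over sup_ext_semb sup_ext_mono left_oc_sup_ext by (simp add: SC_over_UNIV)
  moreover have "h u = sup_ext u" if "is_sup_ext f h" "u \<in> SC" for h u
    using that sup_ext_unique unfolding is_sup_ext_def SC_over_UNIV by simp
  moreover have "sadditive SC sup_ext" if "additive_map f"
    using that sadditive_sup_ext unfolding additive_map_def SC_over_UNIV by simp
  moreover have "sposhom SC sup_ext" if "poshom_map f"
    using that sposhom_sup_ext unfolding poshom_map_def SC_over_UNIV by simp
  ultimately show ?thesis by blast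
qed

lemma is_sup_ext_pos_exists_unique:
  fixes f :: "'a::dc_riesz_space \<Rightarrow> 'b::dc_riesz_space"
  assumes "\<forall>x. 0 \<le> x \<longrightarrow> 0 \<le> f x" "mono_on {x. 0 \<le> x} f" "order_continuous_pos f"
  shows "\<exists>g. is_sup_ext_pos f g \<and> (\<forall>h. is_sup_ext_pos f h \<longrightarrow> (\<forall>u\<in>SCpos. h u = g u)) \<and>
           (additive_pos f \<longrightarrow> sadditive SCpos g) \<and> (poshom_pos f \<longrightarrow> sposhom SCpos g)"
proof -
  interpret sup_extension "{x. 0 \<le> x}" "{x. 0 \<le> x}" f by (rule sup_extension_nonneg[OF assms])
  have "is_sup_ext_pos f sup_ext"
    unfolding is_sup_ext_pos_def sincr_def
    using sup_ext_in_SC_over sup_ext_semb sup_ext_mono left_oc_sup_ext by (simp add: SC_over_nonneg)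
  moreover have "h u = sup_ext u" if "is_sup_ext_pos f h" "u \<in> SCpos" for h u
    using that sup_ext_unique unfolding is_sup_ext_pos_def SC_over_nonneg by simp
  moreover have "sadditive SCpos sup_ext" if "additive_pos f"
    using that sadditive_sup_ext unfolding additive_pos_def SC_over_nonneg by simp
  moreover have "sposhom SCpos sup_ext" if "poshom_pos f"
    using that sposhom_sup_ext unfolding poshom_pos_def SC_over_nonneg
    by (simp add: scaleR_nonneg_nonneg)
  ultimately show ?thesis by blast
qed

lemma is_sup_ext_sclass:
  fixes f :: "'a::dc_riesz_space \<Rightarrow> 'b::dc_riesz_space"
  assumes "mono f" "order_continuous f" "is_sup_ext f g" "A \<in> Dirs"
  shows "g (sclass A) = sclass (f ` A)"
proof -
  interpret sup_extension UNIV UNIV f by (rule sup_extension_UNIV[OF assms(1,2)])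
  show ?thesis
    using left_oc_sclass[of g A] assms(3,4) unfolding is_sup_ext_def SC_over_UNIV by simp
qed

section \<open>Projections and invariant subspaces\<close>

lemma sub_SC_eq:
  assumes "\<And>x y. x \<in> Z \<Longrightarrow> y \<in> Z \<Longrightarrow> sup x y \<in> Z"
  shows "sub_SC Z = sclass ` {A \<in> Dirs. A \<subseteq> Z}"
proof (intro equalityI subsetI)
  fix u assume "u \<in> sub_SC Z"
  then obtain A where A: "A \<noteq> {}" "A \<subseteq> Z" "is_slub (semb ` A) u" unfolding sub_SC_def by blast
  have "u = sclass (sup_closure A)" by (rule is_slub_unique[OF A(3) is_slub_semb_image[OF A(1)]])
  moreover have "sup_closure A \<in> Dirs" "sup_closure A \<subseteq> Z"
    using sup_closure_Dirs[OF A(1)] sup_closure_subset[OF assms A(2)] by blast+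
  ultimately show "u \<in> sclass ` {A \<in> Dirs. A \<subseteq> Z}" by blast
next
  fix u assume "u \<in> sclass ` {A \<in> Dirs. A \<subseteq> Z}"
  then obtain A where A: "A \<in> Dirs" "A \<subseteq> Z" "u = sclass A" by blast
  then show "u \<in> sub_SC Z"
    unfolding sub_SC_def using is_slub_semb_image_Dirs[OF A(1)] DirsD(1)[OF A(1)] by blast
qed

lemma idempotent_image_eq:
  assumes "f \<circ> f = f" "B \<subseteq> range f"
  shows "f ` B = B"
proof -
  have "f x = x" if x: "x \<in> B" for x
  proof -
    obtain y where "x = f y" using x assms(2) by blast
    then show ?thesis using assms(1) by (metis comp_apply)
  qed
  then have "f ` B = id ` B" by (intro image_cong) auto
  then show ?thesis by simp
qed

lemma regular_subspace_range_projection: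
  fixes f :: "'a::dc_riesz_space \<Rightarrow> 'a"
  assumes mono: "mono f" and oc: "order_continuous f" and idem: "f \<circ> f = f"
    and riesz: "riesz_subspace (range f)"
  shows "regular_subspace (range f)"
  unfolding regular_subspace_def
proof (intro conjI allI impI riesz)
  fix A z assume A: "A \<noteq> {}" "A \<subseteq> range f" and z: "is_lub_on (range f) A z"
  let ?B = "sup_closure A"
  have B: "?B \<in> Dirs" "?B \<subseteq> range f"
    using sup_closure_Dirs[OF A(1)] sup_closure_subset[OF _ A(2)] riesz
    unfolding riesz_subspace_def by blast+
  have z_ub: "\<forall>a\<in>A. a \<le> z" using z unfolding is_lub_on_def by blast
  have bdd: "bdd_above ?B"
    by (rule bdd_aboveI[of _ z]) (use sup_closure_le z_ub in blast)
  have Sup_B_le_iff: "Sup ?B \<le> y \<longleftrightarrow> (\<forall>a\<in>A. a \<le> y)" for y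
  proof
    assume "Sup ?B \<le> y"
    then show "\<forall>a\<in>A. a \<le> y"
      using cSup_upper[OF sup_closure.base bdd] by (meson order_trans)
  qed (rule cSup_least[OF DirsD(1)[OF B(1)]], erule sup_closure_le, blast)
  have "f (Sup ?B) = Sup (f ` ?B)" by (rule order_continuous_cSup[OF mono oc B(1) bdd])
  also have "f ` ?B = ?B" by (rule idempotent_image_eq[OF idem B(2)])
  finally have "Sup ?B \<in> range f" by (metis rangeI)
  moreover have "\<forall>a\<in>A. a \<le> Sup ?B" using Sup_B_le_iff[of "Sup ?B"] by simp
  ultimately have "z \<le> Sup ?B" using z unfolding is_lub_on_def by blast
  moreover have "Sup ?B \<le> z" using Sup_B_le_iff z_ub by blast
  ultimately have "z = Sup ?B" by (rule order.antisym)
  then show "is_lub_on UNIV A z" unfolding is_lub_on_def using Sup_B_le_iff by blast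
qed

lemma is_sup_ext_image_SC:
  fixes f :: "'a::dc_riesz_space \<Rightarrow> 'a"
  assumes mono: "mono f" and oc: "order_continuous f" and idem: "f \<circ> f = f"
    and riesz: "riesz_subspace (range f)" and g: "is_sup_ext f g"
  shows "g ` SC = sub_SC (range f)"
proof -
  have sub: "sub_SC (range f) = sclass ` {A \<in> Dirs. A \<subseteq> range f}"
    using riesz unfolding riesz_subspace_def by (intro sub_SC_eq) blast
  have "g ` sclass ` Dirs = sclass ` {A \<in> Dirs. A \<subseteq> range f}"
  proof (intro equalityI subsetI)
    fix v assume "v \<in> g ` sclass ` Dirs"
    then obtain A where A: "A \<in> Dirs" "v = sclass (f ` A)"
      using is_sup_ext_sclass[OF mono oc g] by blast
    moreover have "f ` A \<in> Dirs" using Dirs_image[OF A(1) mono_on_subset[OF mono subset_UNIV]] .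
    ultimately show "v \<in> sclass ` {A \<in> Dirs. A \<subseteq> range f}" by blast
  next
    fix v assume "v \<in> sclass ` {A \<in> Dirs. A \<subseteq> range f}"
    then obtain A where A: "A \<in> Dirs" "A \<subseteq> range f" "v = sclass A" by blast
    have "f ` A = A" by (rule idempotent_image_eq[OF idem A(2)])
    then have "g (sclass A) = v" using is_sup_ext_sclass[OF mono oc g A(1)] A(3) by simp
    then show "v \<in> g ` sclass ` Dirs" using A(1) by blast
  qed
  then show ?thesis unfolding sub SC_eq_sclass_image .
qed

lemma is_sup_ext_sub_SC_invariant:
  fixes f :: "'a::dc_riesz_space \<Rightarrow> 'a"
  assumes mono: "mono f" and oc: "order_continuous f" and g: "is_sup_ext f g"
    and Z: "\<And>x y. x \<in> Z \<Longrightarrow> y \<in> Z \<Longrightarrow> sup x y \<in> Z" "f ` Z \<subseteq> Z"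
  shows "g ` sub_SC Z \<subseteq> sub_SC Z"
proof
  fix v assume "v \<in> g ` sub_SC Z"
  then obtain A where A: "A \<in> Dirs" "A \<subseteq> Z" "v = g (sclass A)"
    by (auto simp: sub_SC_eq[OF Z(1)])
  have "v = sclass (f ` A)" using is_sup_ext_sclass[OF mono oc g A(1)] A(3) by simp
  moreover have "f ` A \<in> Dirs" using Dirs_image[OF A(1) mono_on_subset[OF mono subset_UNIV]] .
  moreover have "f ` A \<subseteq> Z" using A(2) Z(2) by blast
  ultimately have "v \<in> sclass ` {A \<in> Dirs. A \<subseteq> Z}" by blast
  then show "v \<in> sub_SC Z" using sub_SC_eq[OF Z(1)] by simp
qed

theorem theoremP1:
  shows
  "(\<forall>f :: 'a::dc_riesz_space \<Rightarrow> 'b::dc_riesz_space.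
      mono f \<and> order_continuous f \<longrightarrow>
      (\<exists>g. is_sup_ext f g \<and> (\<forall>h. is_sup_ext f h \<longrightarrow> (\<forall>u\<in>SC. h u = g u)) \<and>
           (additive_map f \<longrightarrow> sadditive SC g) \<and> (poshom_map f \<longrightarrow> sposhom SC g)))
   \<and>
   (\<forall>f :: 'a \<Rightarrow> 'b.
      (\<forall>x. 0 \<le> x \<longrightarrow> 0 \<le> f x) \<and> mono_on {x. 0 \<le> x} f \<and> order_continuous_pos f \<longrightarrow>
      (\<exists>g. is_sup_ext_pos f g \<and> (\<forall>h. is_sup_ext_pos f h \<longrightarrow> (\<forall>u\<in>SCpos. h u = g u)) \<and>
           (additive_pos f \<longrightarrow> sadditive SCpos g) \<and> (poshom_pos f \<longrightarrow> sposhom SCpos g)))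
   \<and>
   (\<forall>f :: 'a \<Rightarrow> 'a.
      mono f \<and> order_continuous f \<and> linear f \<and> f \<circ> f = f \<and> riesz_subspace (range f) \<longrightarrow>
      regular_subspace (range f) \<and>
      (\<forall>g. is_sup_ext f g \<longrightarrow> g ` SC = sub_SC (range f)))
   \<and>
   (\<forall>(f :: 'a \<Rightarrow> 'a) Z.
      mono f \<and> order_continuous f \<and> linear f \<and> regular_subspace Z \<and> f ` Z \<subseteq> Z \<longrightarrow>
      (\<forall>g. is_sup_ext f g \<longrightarrow> g ` sub_SC Z \<subseteq> sub_SC Z))"
proof (intro conjI allI impI; elim conjE)
  fix f :: "'a \<Rightarrow> 'a" and Z g
  assume "mono f" "order_continuous f" "regular_subspace Z" "f ` Z \<subseteq> Z" "is_sup_ext f g"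
  then show "g ` sub_SC Z \<subseteq> sub_SC Z"
    by (intro is_sup_ext_sub_SC_invariant) (auto simp: regular_subspace_def riesz_subspace_def)
next
  fix f :: "'a \<Rightarrow> 'a" and g
  assume "mono f" "order_continuous f" "f \<circ> f = f" "riesz_subspace (range f)" "is_sup_ext f g"
  then show "g ` SC = sub_SC (range f)" by (rule is_sup_ext_image_SC)
qed (blast intro: is_sup_ext_exists_unique is_sup_ext_pos_exists_unique
      regular_subspace_range_projection)+

end
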